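(* In Dallal's model parameterized by $(\gamma,U,V)$, the reference prior for the reversed group ordering $\{\gamma\}$ first and then $\{U,V\}$, namely $\pi(\gamma,u,v)=\pi(u,v\mid\gamma)\pi(\gamma)$ with $\pi(u,v\mid\gamma)=\frac{(h_U(u)h_V(v))^{1/2}}{\int_0^1\!\int_0^1 (h_U h_V)^{1/2}\,du\,dv}$ and $\pi(\gamma)$ the normalized version of $\exp\{\tfrac12\int_0^1\!\int_0^1 \pi(u,v\mid\gamma)\log h_\gamma(\gamma,u,v)\,du\,dv\}$ on $(0,1)$, coincides with $$\pi_R(\gamma,u,v)=\frac{\sqrt2}{\pi}\frac{\gamma^{-1/2}(1-\gamma)^{-1/2}}{1+\gamma}\cdot\frac{u^{-1/2}(1-u)^{-1/2}}{B(1/2,1/2)}\cdot\frac{v^{-1/2}(1-v)^{-1/2}}{B(1/2,1/2)},\qquad 0<\gamma,u,v<1 .$$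
   Context: Dallal's model: two independent groups $i=0,1$ with fixed sizes $m_{+0},m_{+1}$; in group $i$ the counts $(m_{0i},m_{1i},m_{2i})$ are trinomial with probabilities $1-(1+\gamma)\lambda_i$, $2\gamma\lambda_i$, $(1-\gamma)\lambda_i$, where $0<\gamma<1$, $0<\lambda_i<1/(1+\gamma)$. Set $U=(1+\gamma)\lambda_0$, $V=(1+\gamma)\lambda_1$, $r=m_{+1}/m_{+0}$. The expected Fisher information in $(\gamma,U,V)$ is diagonal with entries $h_\gamma(\gamma,u,v)=\frac{2m_{+0}(u+rv)}{\gamma(1-\gamma)(1+\gamma)^2}$, $h_U(u)=\frac{m_{+0}}{u(1-u)}$, $h_V(v)=\frac{m_{+1}}{v(1-v)}$. $B$ denotes the Beta function. *)

theory Defs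
  imports "HOL-Analysis.Analysis"
begin

text \<open>Dallal's model: group sizes m0 = m_{+0}, m1 = m_{+1} (positive naturals), r = m1/m0.
  Expected Fisher information entries in the (gamma, U, V) parametrisation.\<close>

definition h_gamma :: "nat \<Rightarrow> nat \<Rightarrow> real \<Rightarrow> real \<Rightarrow> real \<Rightarrow> real" where
  "h_gamma m0 m1 g u v =
     2 * real m0 * (u + (real m1 / real m0) * v) / (g * (1 - g) * (1 + g)^2)"

definition h_U :: "nat \<Rightarrow> real \<Rightarrow> real" where
  "h_U m0 u = real m0 / (u * (1 - u))"

definition h_V :: "nat \<Rightarrow> real \<Rightarrow> real" where
  "h_V m1 v = real m1 / (v * (1 - v))"

definition cond_prior :: "nat \<Rightarrow> nat \<Rightarrow> real \<Rightarrow> real \<Rightarrow> real \<Rightarrow> real" where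
  "cond_prior m0 m1 g u v =
     sqrt (h_U m0 u * h_V m1 v) /
     (LBINT u':{0<..<1::real}. LBINT v':{0<..<1::real}. sqrt (h_U m0 u' * h_V m1 v'))"

definition marg_prior_unnorm :: "nat \<Rightarrow> nat \<Rightarrow> real \<Rightarrow> real" where
  "marg_prior_unnorm m0 m1 g =
     exp (1/2 * (LBINT u:{0<..<1::real}. LBINT v:{0<..<1::real}.
                   cond_prior m0 m1 g u v * ln (h_gamma m0 m1 g u v)))"

definition marg_prior :: "nat \<Rightarrow> nat \<Rightarrow> real \<Rightarrow> real" where
  "marg_prior m0 m1 g =
     marg_prior_unnorm m0 m1 g / (LBINT g':{0<..<1::real}. marg_prior_unnorm m0 m1 g')"

definition ref_prior :: "nat \<Rightarrow> nat \<Rightarrow> real \<Rightarrow> real \<Rightarrow> real \<Rightarrow> real" where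
  "ref_prior m0 m1 g u v = cond_prior m0 m1 g u v * marg_prior m0 m1 g"

definition pi_R :: "real \<Rightarrow> real \<Rightarrow> real \<Rightarrow> real" where
  "pi_R g u v =
     sqrt 2 / pi * (g powr (-1/2) * (1 - g) powr (-1/2) / (1 + g)) *
     (u powr (-1/2) * (1 - u) powr (-1/2) / Beta (1/2) (1/2)) *
     (v powr (-1/2) * (1 - v) powr (-1/2) / Beta (1/2) (1/2))"

end

theory Submission
  imports Defs "HOL-Real_Asymp.Real_Asymp"
begin

text \<open>Since h_U h_V factorises, the conditional prior of (u, v) given \<gamma> is the product of
  two arcsine densities x^(-1/2) (1-x)^(-1/2) / B(1/2,1/2) and does not depend on \<gamma>. Moreover
  log h_\<gamma> = log (2 m_+0 / (\<gamma> (1-\<gamma>) (1+\<gamma>)^2)) + log (u + r v), and the second summand has a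
  finite expectation under the arcsine densities, so the exponent defining \<pi>(\<gamma>) is the first
  summand plus a constant. Hence \<pi>(\<gamma>) is proportional to \<gamma>^(-1/2) (1-\<gamma>)^(-1/2) / (1+\<gamma>),
  whose integral over (0,1) is \<pi>/\<surd>2; an antiderivative is \<surd>2 arctan (\<surd>2 \<surd>\<gamma> / \<surd>(1-\<gamma>)).\<close>

lemma Beta_half_half: "Beta (1/2) (1/2) = pi"
  by (simp add: Beta_def Gamma_one_half_real)

lemma
  fixes a b :: real
  assumes "a > 0" "b > 0"
  shows set_integrable_Beta_kernel:
      "set_integrable lborel {0<..<1} (\<lambda>t. t powr (a - 1) * (1 - t) powr (b - 1))"
    and set_integral_Beta_kernel:
      "(LBINT t:{0<..<1}. t powr (a - 1) * (1 - t) powr (b - 1)) = Beta a b"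
proof -
  show int: "set_integrable lborel {0<..<1} (\<lambda>t. t powr (a - 1) * (1 - t) powr (b - 1))"
    by (rule set_integrable_subset[OF integrable_Beta[OF assms]]) auto
  have "((\<lambda>t. t powr (a - 1) * (1 - t) powr (b - 1)) has_integral Beta a b) {0<..<1}"
    using has_integral_Beta_real[OF assms] by (simp add: has_integral_Icc_iff_Ioo)
  then show "(LBINT t:{0<..<1}. t powr (a - 1) * (1 - t) powr (b - 1)) = Beta a b"
    using set_borel_integral_eq_integral(2)[OF int] by (simp add: has_integral_iff)
qed

lemma set_lebesgue_integral_cong_Ioo:
  "(\<And>x::real. 0 < x \<Longrightarrow> x < 1 \<Longrightarrow> f x = g x) \<Longrightarrow>
     (LBINT x:{0<..<1}. f x) = (LBINT x:{0<..<1}. g x)"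
  by (rule set_lebesgue_integral_cong) auto

definition arcsine_kernel :: "real \<Rightarrow> real" where
  "arcsine_kernel x = x powr (-1/2) * (1 - x) powr (-1/2)"

lemma arcsine_kernel_pos: "0 < x \<Longrightarrow> x < 1 \<Longrightarrow> arcsine_kernel x > 0"
  by (simp add: arcsine_kernel_def)

lemma arcsine_kernel_eq: "0 < x \<Longrightarrow> x < 1 \<Longrightarrow> arcsine_kernel x = 1 / sqrt (x * (1 - x))"
  by (simp add: arcsine_kernel_def powr_minus_divide powr_half_sqrt real_sqrt_mult)

lemma borel_measurable_arcsine_kernel [measurable]: "arcsine_kernel \<in> borel_measurable borel"
  unfolding arcsine_kernel_def by measurable

lemma
  shows set_integrable_arcsine_kernel: "set_integrable lborel {0<..<1} arcsine_kernel"
    and set_integral_arcsine_kernel: "(LBINT x:{0<..<1}. arcsine_kernel x) = pi"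
proof -
  have "arcsine_kernel = (\<lambda>t. t powr (1/2 - 1) * (1 - t) powr (1/2 - 1))"
    by (simp add: arcsine_kernel_def fun_eq_iff)
  then show "set_integrable lborel {0<..<1} arcsine_kernel" "(LBINT x:{0<..<1}. arcsine_kernel x) = pi"
    using set_integrable_Beta_kernel[of "1/2" "1/2"] set_integral_Beta_kernel[of "1/2" "1/2"]
    by (simp_all add: Beta_half_half)
qed

lemma abs_ln_le_powr:
  fixes x e :: real
  assumes "0 < x" "x \<le> 1" "e > 0"
  shows "\<bar>ln x\<bar> \<le> x powr (-e) / e"
proof -
  have "ln (x powr (-e)) \<le> x powr (-e) - 1"
    using assms by (intro ln_le_minus_one) auto
  then have "-e * ln x \<le> x powr (-e)"
    using assms by (simp add: ln_powr)
  moreover have "ln x \<le> 0" using assms by simp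
  ultimately show ?thesis using assms by (simp add: field_simps)
qed

lemma set_integrable_arcsine_kernel_ln:
  "set_integrable lborel {0<..<1} (\<lambda>x. arcsine_kernel x * ln x)"
proof (rule set_integrable_bound)
  show "set_integrable lborel {0<..<1} (\<lambda>x::real. 4 * (x powr (1/4 - 1) * (1 - x) powr (1/2 - 1)))"
    using set_integrable_Beta_kernel[of "1/4" "1/2"] by (intro set_integrable_mult_right) auto
  show "set_borel_measurable lborel {0<..<1} (\<lambda>x. arcsine_kernel x * ln x)"
    unfolding set_borel_measurable_def by measurable
  have "arcsine_kernel x * \<bar>ln x\<bar> \<le> 4 * (x powr (1/4 - 1) * (1 - x) powr (1/2 - 1))"
    if x: "0 < x" "x < 1" for x
  proof -
    have "arcsine_kernel x * \<bar>ln x\<bar> \<le> arcsine_kernel x * (x powr (-1/4) / (1/4))"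
      using abs_ln_le_powr[of x "1/4"] arcsine_kernel_pos[OF x] x by (intro mult_left_mono) auto
    also have "\<dots> = 4 * (x powr (-1/2) * x powr (-1/4) * (1 - x) powr (-1/2))"
      by (simp add: arcsine_kernel_def)
    also have "x powr (-1/2) * x powr (-1/4) = x powr (1/4 - 1)"
      using x by (simp add: powr_add[symmetric])
    finally show ?thesis by simp
  qed
  then show "AE x in lborel. x \<in> {0<..<1} \<longrightarrow>
      norm (arcsine_kernel x * ln x) \<le> norm (4 * (x powr (1/4 - 1) * (1 - x) powr (1/2 - 1)))"
    by (auto intro!: AE_I2 simp: abs_mult abs_of_pos arcsine_kernel_pos)
qed

lemma abs_ln_add_mult_le:
  fixes r u v :: real
  assumes "r > 0" "0 < u" "u < 1" "0 < v" "v < 1"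
  shows "\<bar>ln (u + r * v)\<bar> \<le> \<bar>ln (1 + r)\<bar> + \<bar>ln r\<bar> + \<bar>ln v\<bar>"
proof -
  have rv: "0 < r * v" "r * v \<le> r" using assms by (simp_all add: mult_le_cancel_left1)
  have "ln (u + r * v) \<le> ln (1 + r)" using assms rv by simp
  moreover have "ln (r * v) \<le> ln (u + r * v)" using assms rv by simp
  moreover have "ln (r * v) = ln r + ln v" using assms by (simp add: ln_mult)
  ultimately show ?thesis by linarith
qed

definition arcsine_ln_moment :: "real \<Rightarrow> real \<Rightarrow> real" where
  "arcsine_ln_moment r u = (LBINT v:{0<..<1}. arcsine_kernel v * ln (u + r * v))"

lemma set_integrable_arcsine_ln_majorant:
  "set_integrable lborel {0<..<1} (\<lambda>v. arcsine_kernel v * (c + \<bar>ln v\<bar>))"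
proof -
  have "set_integrable lborel {0<..<1} (\<lambda>v. c * arcsine_kernel v + \<bar>arcsine_kernel v * ln v\<bar>)"
    using set_integrable_arcsine_kernel set_integrable_arcsine_kernel_ln
    by (intro set_integral_add set_integrable_mult_right set_integrable_abs)
  then show ?thesis
    by (rule set_integrable_cong[THEN iffD1, rotated -1])
       (auto simp: abs_mult algebra_simps arcsine_kernel_pos less_imp_le)
qed

lemma
  fixes r u :: real
  assumes "r > 0" "0 < u" "u < 1"
  shows set_integrable_arcsine_ln_affine:
      "set_integrable lborel {0<..<1} (\<lambda>v. arcsine_kernel v * ln (u + r * v))"
    and abs_arcsine_ln_moment_le:
      "\<bar>arcsine_ln_moment r u\<bar> \<le>
         (LBINT v:{0<..<1}. arcsine_kernel v * (\<bar>ln (1 + r)\<bar> + \<bar>ln r\<bar> + \<bar>ln v\<bar>))"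
proof -
  let ?M = "\<lambda>v. arcsine_kernel v * (\<bar>ln (1 + r)\<bar> + \<bar>ln r\<bar> + \<bar>ln v\<bar>)"
  have M: "set_integrable lborel {0<..<1} ?M"
    using set_integrable_arcsine_ln_majorant[of "\<bar>ln (1 + r)\<bar> + \<bar>ln r\<bar>"] by (simp add: add.assoc)
  have bound: "\<bar>arcsine_kernel v * ln (u + r * v)\<bar> \<le> ?M v" if "0 < v" "v < 1" for v
    using abs_ln_add_mult_le[OF assms that] arcsine_kernel_pos[OF that]
    by (simp add: abs_mult)
  show int: "set_integrable lborel {0<..<1} (\<lambda>v. arcsine_kernel v * ln (u + r * v))"
  proof (rule set_integrable_bound[OF M])
    show "set_borel_measurable lborel {0<..<1} (\<lambda>v. arcsine_kernel v * ln (u + r * v))"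
      unfolding set_borel_measurable_def by measurable
    show "AE v in lborel. v \<in> {0<..<1} \<longrightarrow> norm (arcsine_kernel v * ln (u + r * v)) \<le> norm (?M v)"
      using bound by (auto intro!: AE_I2 order.trans[OF _ abs_ge_self])
  qed
  have "\<bar>arcsine_ln_moment r u\<bar> \<le> (LBINT v:{0<..<1}. norm (arcsine_kernel v * ln (u + r * v)))"
    unfolding arcsine_ln_moment_def using set_integral_norm_bound[OF int] by simp
  also have "\<dots> \<le> (LBINT v:{0<..<1}. ?M v)"
    using int M bound by (intro set_integral_mono) (auto simp: set_integrable_abs)
  finally show "\<bar>arcsine_ln_moment r u\<bar> \<le> (LBINT v:{0<..<1}. ?M v)" .
qed

lemma borel_measurable_arcsine_ln_moment: "arcsine_ln_moment r \<in> borel_measurable lborel"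
proof -
  have "(\<lambda>u. LINT v|lborel. indicator {0<..<1} v *\<^sub>R (arcsine_kernel v * ln (u + r * v)))
          \<in> borel_measurable lborel"
    by (rule lborel.borel_measurable_lebesgue_integral) measurable
  then show ?thesis
    unfolding arcsine_ln_moment_def[abs_def] set_lebesgue_integral_def by simp
qed

lemma set_integrable_arcsine_kernel_mult_ln_moment:
  assumes "r > 0"
  shows "set_integrable lborel {0<..<1} (\<lambda>u. arcsine_kernel u * arcsine_ln_moment r u)"
proof -
  define C where "C = (LBINT v:{0<..<1}. arcsine_kernel v * (\<bar>ln (1 + r)\<bar> + \<bar>ln r\<bar> + \<bar>ln v\<bar>))"
  show ?thesis
  proof (rule set_integrable_bound[OF set_integrable_mult_left[OF set_integrable_arcsine_kernel, of C]])
    show "set_borel_measurable lborel {0<..<1} (\<lambda>u. arcsine_kernel u * arcsine_ln_moment r u)"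
      unfolding set_borel_measurable_def using borel_measurable_arcsine_ln_moment by measurable
    show "AE u in lborel. u \<in> {0<..<1} \<longrightarrow>
        norm (arcsine_kernel u * arcsine_ln_moment r u) \<le> norm (arcsine_kernel u * C)"
      using abs_arcsine_ln_moment_le[OF assms] arcsine_kernel_pos less_imp_le[OF arcsine_kernel_pos]
      by (auto intro!: AE_I2 simp: abs_mult C_def intro!: mult_left_mono order.trans[OF _ abs_ge_self])
  qed
qed

definition marg_kernel :: "real \<Rightarrow> real" where
  "marg_kernel g = arcsine_kernel g / (1 + g)"

lemma has_real_derivative_marg_kernel_primitive:
  assumes "0 < x" "x < 1"
  shows "((\<lambda>g. sqrt 2 * arctan (sqrt 2 * sqrt g / sqrt (1 - g))) has_real_derivative marg_kernel x) (at x)"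
proof -
  define a b where "a = sqrt x" and "b = sqrt (1 - x)"
  have ab: "a > 0" "b > 0" "a\<^sup>2 + b\<^sup>2 = 1" using assms by (auto simp: a_def b_def)
  have "((\<lambda>g. sqrt 2 * arctan (sqrt 2 * sqrt g / sqrt (1 - g))) has_real_derivative
     sqrt 2 * (inverse (1 + (sqrt 2 * a / b)\<^sup>2) *
      ((sqrt 2 * (inverse a / 2) * b - sqrt 2 * a * (inverse b / 2 * - 1)) / b\<^sup>2))) (at x)"
    using assms unfolding a_def b_def by (auto intro!: derivative_eq_intros)
  also have "1 + (sqrt 2 * a / b)\<^sup>2 = (1 + a\<^sup>2) / b\<^sup>2"
    using ab by (simp add: field_simps)
  also have "sqrt 2 * (inverse a / 2) * b - sqrt 2 * a * (inverse b / 2 * - 1)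
      = sqrt 2 * (a\<^sup>2 + b\<^sup>2) / (2 * a * b)"
    using ab(1,2) by (simp add: field_simps power2_eq_square)
  also have "sqrt 2 * (inverse ((1 + a\<^sup>2) / b\<^sup>2) * (sqrt 2 * (a\<^sup>2 + b\<^sup>2) / (2 * a * b) / b\<^sup>2))
      = 1 / (a * b * (1 + a\<^sup>2))"
    using ab by (simp add: add_pos_nonneg divide_simps power2_eq_square)
  also have "\<dots> = marg_kernel x"
    using assms by (simp add: a_def b_def marg_kernel_def arcsine_kernel_def powr_minus_divide powr_half_sqrt)
  finally show ?thesis .
qed

lemma
  shows set_integrable_marg_kernel: "set_integrable lborel {0<..<1} marg_kernel"
    and set_integral_marg_kernel: "(LBINT g:{0<..<1}. marg_kernel g) = pi / sqrt 2"
proof -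
  define F where "F g = sqrt 2 * arctan (sqrt 2 * sqrt g / sqrt (1 - g))" for g :: real
  have "(F \<longlongrightarrow> 0) (at_right 0)"
    unfolding F_def by real_asymp
  then have lim0: "((F \<circ> real_of_ereal) \<longlongrightarrow> 0) (at_right (ereal 0))"
    unfolding ereal_tendsto_simps1 .
  have "(F \<longlongrightarrow> sqrt 2 * (pi / 2)) (at_left 1)"
    unfolding F_def by (real_asymp simp: sqrt_def)
  then have lim1: "((F \<circ> real_of_ereal) \<longlongrightarrow> sqrt 2 * (pi / 2)) (at_left (ereal 1))"
    unfolding ereal_tendsto_simps1 .
  have cont: "isCont marg_kernel x" if "0 < x" "x < 1" for x
    using that unfolding marg_kernel_def arcsine_kernel_def by (intro continuous_intros) auto
  have deriv: "(F has_real_derivative marg_kernel x) (at x)" if "0 < x" "x < 1" for x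
    using has_real_derivative_marg_kernel_primitive[OF that] unfolding F_def .
  have nonneg: "0 \<le> marg_kernel x" if "0 < x" "x < 1" for x
    using arcsine_kernel_pos[OF that] that by (simp add: marg_kernel_def)
  have FTC: "set_integrable lborel (einterval (ereal 0) (ereal 1)) marg_kernel \<and>
        (LBINT x=ereal 0..ereal 1. marg_kernel x) = sqrt 2 * (pi / 2) - 0"
    using interval_integral_FTC_nonneg[of "ereal 0" "ereal 1" F marg_kernel]
      deriv cont nonneg lim0 lim1 by auto
  then show "set_integrable lborel {0<..<1} marg_kernel"
    by simp
  from FTC have "(LBINT g:{0<..<1}. marg_kernel g) = sqrt 2 * (pi / 2)"
    by (simp add: interval_lebesgue_integral_def)
  also have "\<dots> = pi / sqrt 2"
    by (simp add: field_simps flip: mult.assoc)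
  finally show "(LBINT g:{0<..<1}. marg_kernel g) = pi / sqrt 2" .
qed

lemma sqrt_h_U_mult_h_V:
  assumes "0 < u" "u < 1" "0 < v" "v < 1"
  shows "sqrt (h_U m0 u * h_V m1 v) = sqrt (real m0 * real m1) * arcsine_kernel u * arcsine_kernel v"
  using assms by (simp add: h_U_def h_V_def arcsine_kernel_eq real_sqrt_mult real_sqrt_divide)

lemma cond_prior_eq:
  assumes "m0 > 0" "m1 > 0" "0 < u" "u < 1" "0 < v" "v < 1"
  shows "cond_prior m0 m1 g u v = arcsine_kernel u * arcsine_kernel v / pi\<^sup>2"
proof -
  have "(LBINT u':{0<..<1}. LBINT v':{0<..<1}. sqrt (h_U m0 u' * h_V m1 v'))
      = (LBINT u':{0<..<1}. (sqrt (real m0 * real m1) * pi) * arcsine_kernel u')"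
  proof (rule set_lebesgue_integral_cong_Ioo)
    fix u' :: real assume u': "0 < u'" "u' < 1"
    have "(LBINT v':{0<..<1}. sqrt (h_U m0 u' * h_V m1 v'))
        = (LBINT v':{0<..<1}. (sqrt (real m0 * real m1) * arcsine_kernel u') * arcsine_kernel v')"
      using u' by (intro set_lebesgue_integral_cong_Ioo) (simp add: sqrt_h_U_mult_h_V)
    then show "(LBINT v':{0<..<1}. sqrt (h_U m0 u' * h_V m1 v'))
        = (sqrt (real m0 * real m1) * pi) * arcsine_kernel u'"
      by (simp add: set_integral_arcsine_kernel)
  qed
  also have "\<dots> = sqrt (real m0 * real m1) * pi * pi"
    by (simp add: set_integral_arcsine_kernel)
  finally show ?thesis
    unfolding cond_prior_def using assms by (simp add: sqrt_h_U_mult_h_V power2_eq_square)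
qed

lemma ln_h_gamma:
  assumes "m0 > 0" "m1 > 0" "0 < g" "g < 1" "0 < u" "u < 1" "0 < v" "v < 1"
  shows "ln (h_gamma m0 m1 g u v) =
           ln (2 * real m0 / (g * (1 - g) * (1 + g)\<^sup>2)) + ln (u + real m1 / real m0 * v)"
proof -
  have "u + real m1 / real m0 * v > 0" "2 * real m0 / (g * (1 - g) * (1 + g)\<^sup>2) > 0"
    using assms by (simp_all add: add_pos_pos)
  then show ?thesis
    by (simp add: h_gamma_def ln_mult_pos[symmetric] mult.commute mult.left_commute)
qed

lemma expected_ln_h_gamma:
  assumes "m0 > 0" "m1 > 0" "0 < g" "g < 1"
  defines "r \<equiv> real m1 / real m0"
  shows "(LBINT u:{0<..<1}. LBINT v:{0<..<1}. cond_prior m0 m1 g u v * ln (h_gamma m0 m1 g u v))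
     = ln (2 * real m0 / (g * (1 - g) * (1 + g)\<^sup>2))
       + (LBINT u:{0<..<1}. arcsine_kernel u * arcsine_ln_moment r u) / pi\<^sup>2"
proof -
  define K where "K = ln (2 * real m0 / (g * (1 - g) * (1 + g)\<^sup>2))"
  have r: "r > 0" using assms by (simp add: r_def)
  have "(LBINT u:{0<..<1}. LBINT v:{0<..<1}. cond_prior m0 m1 g u v * ln (h_gamma m0 m1 g u v))
      = (LBINT u:{0<..<1}. K / pi * arcsine_kernel u + 1 / pi\<^sup>2 * (arcsine_kernel u * arcsine_ln_moment r u))"
  proof (rule set_lebesgue_integral_cong_Ioo)
    fix u :: real assume u: "0 < u" "u < 1"
    have "(LBINT v:{0<..<1}. cond_prior m0 m1 g u v * ln (h_gamma m0 m1 g u v))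
        = (LBINT v:{0<..<1}. arcsine_kernel u / pi\<^sup>2 * K * arcsine_kernel v
                              + arcsine_kernel u / pi\<^sup>2 * (arcsine_kernel v * ln (u + r * v)))"
      using u assms by (intro set_lebesgue_integral_cong_Ioo)
        (simp add: cond_prior_eq ln_h_gamma K_def algebra_simps)
    also have "\<dots> = arcsine_kernel u / pi\<^sup>2 * K * pi + arcsine_kernel u / pi\<^sup>2 * arcsine_ln_moment r u"
      using set_integrable_arcsine_ln_affine[OF r u] set_integrable_arcsine_kernel
      by (simp add: arcsine_ln_moment_def set_integral_arcsine_kernel)
    finally show "(LBINT v:{0<..<1}. cond_prior m0 m1 g u v * ln (h_gamma m0 m1 g u v))
        = K / pi * arcsine_kernel u + 1 / pi\<^sup>2 * (arcsine_kernel u * arcsine_ln_moment r u)"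
      by (simp add: power2_eq_square)
  qed
  also have "\<dots> = K / pi * pi + 1 / pi\<^sup>2 * (LBINT u:{0<..<1}. arcsine_kernel u * arcsine_ln_moment r u)"
    using set_integrable_arcsine_kernel_mult_ln_moment[OF r] set_integrable_arcsine_kernel
    by (simp add: set_integral_arcsine_kernel)
  finally show ?thesis by (simp add: K_def)
qed

lemma marg_prior_unnorm_proportional:
  assumes "m0 > 0" "m1 > 0"
  obtains c where "c > 0" "\<And>g. 0 < g \<Longrightarrow> g < 1 \<Longrightarrow> marg_prior_unnorm m0 m1 g = c * marg_kernel g"
proof
  define C where "C = (LBINT u:{0<..<1}. arcsine_kernel u * arcsine_ln_moment (real m1 / real m0) u) / pi\<^sup>2"
  show "exp (C / 2) * sqrt (2 * real m0) > 0" using assms by simp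
  fix g :: real assume g: "0 < g" "g < 1"
  define D where "D = g * (1 - g) * (1 + g)\<^sup>2"
  have D: "D > 0" using g by (simp add: D_def)
  have "marg_prior_unnorm m0 m1 g = exp (C / 2) * exp (ln (2 * real m0 / D) / 2)"
    unfolding marg_prior_unnorm_def expected_ln_h_gamma[OF assms g]
    by (simp add: C_def D_def exp_add[symmetric] add_divide_distrib)
  also have "exp (ln (2 * real m0 / D) / 2) = sqrt (2 * real m0 / D)"
    using assms D by (simp add: powr_def powr_half_sqrt[symmetric])
  also have "sqrt D = sqrt g * sqrt (1 - g) * (1 + g)"
    using g by (simp add: D_def real_sqrt_mult)
  then have "sqrt (2 * real m0 / D) = sqrt (2 * real m0) * marg_kernel g"
    using g by (simp add: real_sqrt_divide marg_kernel_def arcsine_kernel_def powr_minus_divide powr_half_sqrt)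
  finally show "marg_prior_unnorm m0 m1 g = exp (C / 2) * sqrt (2 * real m0) * marg_kernel g"
    by simp
qed

lemma marg_prior_eq:
  assumes "m0 > 0" "m1 > 0" "0 < g" "g < 1"
  shows "marg_prior m0 m1 g = sqrt 2 / pi * marg_kernel g"
proof -
  obtain c where c: "c > 0" "\<And>g. 0 < g \<Longrightarrow> g < 1 \<Longrightarrow> marg_prior_unnorm m0 m1 g = c * marg_kernel g"
    using marg_prior_unnorm_proportional[OF assms(1,2)] by blast
  have "(LBINT g':{0<..<1}. marg_prior_unnorm m0 m1 g') = c * (pi / sqrt 2)"
    by (simp add: set_lebesgue_integral_cong_Ioo[of _ "\<lambda>g. c * marg_kernel g"] c(2)
          set_integral_marg_kernel)
  then show ?thesis
    unfolding marg_prior_def using c assms by simp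
qed

theorem mainTheorem4:
  fixes m0 m1 :: nat and g u v :: real
  assumes "m0 > 0" and "m1 > 0"
    and "0 < g" and "g < 1" and "0 < u" and "u < 1" and "0 < v" and "v < 1"
  shows "ref_prior m0 m1 g u v = pi_R g u v"
proof -
  have "ref_prior m0 m1 g u v = arcsine_kernel u * arcsine_kernel v / pi\<^sup>2 * (sqrt 2 / pi * marg_kernel g)"
    unfolding ref_prior_def cond_prior_eq[OF assms(1,2,5-8)] marg_prior_eq[OF assms(1-4)] ..
  also have "\<dots> = pi_R g u v"
    by (simp add: pi_R_def Beta_half_half marg_kernel_def arcsine_kernel_def power2_eq_square ac_simps)
  finally show ?thesis .
qed

end
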